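(* Let $d\ge2$ be an integer and consider the cone percolation process with radius of influence $R$ on the homogeneous tree $\mathbb{T}_d$, with law $\mathbb{P}$ and survival event $V$. Let $\rho$ be the smallest non-negative root of $\mathbb{E}(\rho^{d^R})+(1-\rho)p_0=\rho$ and $\psi$ the smallest non-negative root of $\mathbb{E}\big(\psi^{\sum_{m=1}^{R}d^m}\big)=\psi$ (an empty sum being $0$). Then $$1-\big(1-\rho^{\frac{d+1}{d}}\big)p_0-\mathbb{E}\Big(\rho^{\frac{d+1}{d}d^R}\Big)\ \le\ \mathbb{P}(V)\ \le\ 1-\mathbb{E}\Big(\psi^{\frac{d+1}{d-1}(d^R-1)}\Big).$$
   Context: Cone percolation process: Let $\mathbb{T}$ be a tree with origin $\mathcal{O}$ and graph distance $d(\cdot,\cdot)$. Write $u\le v$ if $u$ lies on the path from $\mathcal{O}$ to $v$. Let $R$ be a random variable with values in $\{0,1,2,\dots\}$, $p_k=\mathbb{P}(R=k)$, and assume $p_0\in(0,1)$. Let $\{R_v\}$ be i.i.d. copies of $R$ indexed by the vertices. For each vertex $u$ let $B_u=\{v: u\le v,\ d(u,v)\le R_u\}$. Set $I_0=\{\mathcal{O}\}$, $I_{n+1}=\bigcup_{u\in I_n}B_u$, $I=\bigcup_n I_n$; survival is the event $V=\{|I|=\infty\}$. $\mathbb{T}_d$ is the tree in which every vertex has degree $d+1$, with origin $\mathcal{O}$. *)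

theory Defs
  imports "HOL-Probability.Probability"
begin

text \<open>Vertices of the homogeneous tree T_d (every vertex has degree d+1) are encoded as
  lists of naturals, the path from the origin []: the origin has children 0..d,
  every other vertex has children 0..d-1.  u \<le> v iff u is a prefix of v, and then
  the graph distance d(u,v) = length v - length u.\<close>

definition tree_vertex :: "nat \<Rightarrow> nat list \<Rightarrow> bool" where
  "tree_vertex d xs \<longleftrightarrow> xs = [] \<or> (hd xs \<le> d \<and> (\<forall>x\<in>set (tl xs). x < d))"

text \<open>The cone B_u = {v : u \<le> v, d(u,v) \<le> R_u}, where the sample omega assigns to every
  vertex its radius R_v.\<close>

definition cone :: "nat \<Rightarrow> (nat list \<Rightarrow> nat) \<Rightarrow> nat list \<Rightarrow> nat list set" where
  "cone d \<omega> u = {v. tree_vertex d v \<and> prefix u v \<and> length v - length u \<le> \<omega> u}"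

fun cone_gen :: "nat \<Rightarrow> (nat list \<Rightarrow> nat) \<Rightarrow> nat \<Rightarrow> nat list set" where
  "cone_gen d \<omega> 0 = {[]}"
| "cone_gen d \<omega> (Suc n) = (\<Union>u\<in>cone_gen d \<omega> n. cone d \<omega> u)"

definition cone_cluster :: "nat \<Rightarrow> (nat list \<Rightarrow> nat) \<Rightarrow> nat list set" where
  "cone_cluster d \<omega> = (\<Union>n. cone_gen d \<omega> n)"

text \<open>Law of the process: i.i.d. radii with law p at every vertex (indexed by all lists;
  only tree vertices are ever used).\<close>

definition cone_space :: "nat pmf \<Rightarrow> (nat list \<Rightarrow> nat) measure" where
  "cone_space p = (\<Pi>\<^sub>M v\<in>UNIV. measure_pmf p)"

definition survival :: "nat \<Rightarrow> nat pmf \<Rightarrow> (nat list \<Rightarrow> nat) set" where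
  "survival d p = {\<omega> \<in> space (cone_space p). infinite (cone_cluster d \<omega>)}"

end

theory Submission
  imports Defs
begin

text \<open>Lower bound: inside the \<open>d\<close>-ary subtrees, follow chains of full jumps, in which a
  vertex \<open>u\<close> with \<open>R\<^sub>u > 0\<close> hands over to one vertex at distance exactly \<open>R\<^sub>u\<close> below it.
  Subtrees below distinct vertices are independent, so the probability that no chain of
  length \<open>n\<close> starts at a vertex is the \<open>n\<close>-th iterate from \<open>0\<close> of
  \<open>x \<mapsto> p\<^sub>0 + \<Sum>\<^sub>k\<^sub>>\<^sub>0 p\<^sub>k x^(d^k)\<close>, hence at most \<open>\<rho>\<close>. Since the origin has \<open>d + 1\<close> children,
  it starts arbitrarily long chains, which force survival, with probability at least
  \<open>1 - p\<^sub>0 - \<Sum>\<^sub>k\<^sub>>\<^sub>0 p\<^sub>k \<rho>^((d + 1) d^(k - 1))\<close>; this is the stated lower bound.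

  Upper bound: survival forces the cluster to reach every depth \<open>h\<close>. Conditioning on the
  radius of the root, the probability of not reaching depth \<open>h\<close> obeys a recursion whose
  solution is bounded below by a sequence \<open>\<phi>\<^sub>h\<close> increasing to a fixed point \<open>L\<close> of
  \<open>x \<mapsto> \<bbbE> x^(d + \<dots> + d^R)\<close>. Hence \<open>\<psi> \<le> L\<close>, and \<open>h \<rightarrow> \<infinity>\<close> gives the stated upper bound.\<close>

lemma sums_pmf_expectation:
  fixes f :: "nat \<Rightarrow> real"
  assumes "\<And>k. \<bar>f k\<bar> \<le> b"
  shows "(\<lambda>k. pmf p k * f k) sums measure_pmf.expectation p f"
proof -
  have "integrable (measure_pmf p) f"
    by (intro measure_pmf.integrable_const_bound[where B=b]) (auto simp: assms)
  then have int: "integrable (count_space UNIV) (\<lambda>k. pmf p k *\<^sub>R f k)"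
    unfolding measure_pmf_eq_density by (subst (asm) integrable_density) auto
  moreover have "measure_pmf.expectation p f = (LINT k|count_space UNIV. pmf p k *\<^sub>R f k)"
    unfolding measure_pmf_eq_density by (subst integral_density) auto
  ultimately show ?thesis
    using sums_integral_count_space_nat[OF int] by simp
qed

lemma sums_pmf: "(\<lambda>k. pmf p k) sums 1"
  using sums_pmf_expectation[of "\<lambda>_. 1" 1 p] by simp

lemma sum_pmf_le_1: "finite A \<Longrightarrow> (\<Sum>k\<in>A. pmf p k) \<le> 1"
  using measure_measure_pmf_finite[of A p] measure_pmf.prob_le_1[of p A] by simp

lemma pmf_expectation_mono:
  fixes f g :: "nat \<Rightarrow> real"
  assumes "\<And>k. f k \<le> g k" "\<And>k. \<bar>f k\<bar> \<le> b" "\<And>k. \<bar>g k\<bar> \<le> b"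
  shows "measure_pmf.expectation p f \<le> measure_pmf.expectation p g"
  using assms by (intro sums_le[OF _ sums_pmf_expectation sums_pmf_expectation]) (auto intro: mult_left_mono)

lemma sums_pmf_expectation_modify_0:
  fixes f g :: "nat \<Rightarrow> real"
  assumes "\<And>k. \<bar>f k\<bar> \<le> b" "\<And>k. 0 < k \<Longrightarrow> g k = f k"
  shows "(\<lambda>k. pmf p k * g k) sums (measure_pmf.expectation p f + pmf p 0 * (g 0 - f 0))"
proof -
  have "(\<lambda>k. pmf p k * f k + (if k = 0 then pmf p 0 * (g 0 - f 0) else 0))
      sums (measure_pmf.expectation p f + pmf p 0 * (g 0 - f 0))"
    using assms(1) by (intro sums_add sums_pmf_expectation sums_single)
  moreover have "pmf p k * f k + (if k = 0 then pmf p 0 * (g 0 - f 0) else 0) = pmf p k * g k" for k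
    using assms(2)[of k] by (cases k) (simp_all add: algebra_simps)
  ultimately show ?thesis
    by simp
qed

lemma pmf_expectation_zero_power:
  fixes p :: "nat pmf" and e :: "nat \<Rightarrow> nat"
  assumes "\<And>k. 0 < k \<Longrightarrow> 0 < e k"
  shows "measure_pmf.expectation p (\<lambda>k. (0::real) ^ e k) = pmf p 0 * 0 ^ e 0"
proof -
  have "(\<lambda>k. (0::real) ^ e k) = (\<lambda>k. if k = 0 then 0 ^ e 0 else 0)"
    using assms by (auto simp: fun_eq_iff)
  then show ?thesis
    by (simp only:) (subst integral_measure_pmf_real[of "{0}"], auto split: if_splits)
qed

lemma tendsto_sum_pmf_truncated:
  fixes f :: "nat \<Rightarrow> nat \<Rightarrow> real"
  assumes bound: "\<And>h k. \<bar>f h k\<bar> \<le> 1" and lim: "\<And>k. (\<lambda>h. f h k) \<longlonglongrightarrow> g k"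
  shows "(\<lambda>h. \<Sum>k\<le>h. pmf p k * f h k) \<longlonglongrightarrow> measure_pmf.expectation p g"
proof -
  have "(\<lambda>h. if k \<le> h then f h k else 0) \<longlonglongrightarrow> g k" for k
    using lim by (rule Lim_transform_eventually) (auto simp: eventually_at_top_linorder)
  then have "(\<lambda>h. measure_pmf.expectation p (\<lambda>k. if k \<le> h then f h k else 0))
      \<longlonglongrightarrow> measure_pmf.expectation p g"
    by (intro integral_dominated_convergence[where w="\<lambda>_. 1"]) (auto simp: bound)
  moreover have "measure_pmf.expectation p (\<lambda>k. if k \<le> h then f h k else 0) = (\<Sum>k\<le>h. pmf p k * f h k)" for h
    by (subst integral_measure_pmf_real[of "{..h}"]) (auto simp: mult.commute split: if_splits intro!: sum.cong)
  ultimately show ?thesis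
    by simp
qed

section \<open>The product measure of the radii\<close>

definition subtree :: "nat list \<Rightarrow> (nat list \<Rightarrow> nat) \<Rightarrow> nat list \<Rightarrow> nat" where
  "subtree u \<omega> = (\<lambda>s. \<omega> (u @ s))"

lemma subtree_Nil_apply [simp]: "subtree u \<omega> [] = \<omega> u"
  by (simp add: subtree_def)

lemma subtree_subtree [simp]: "subtree u (subtree v \<omega>) = subtree (v @ u) \<omega>"
  by (simp add: subtree_def)

lemma space_cone_space [simp]: "space (cone_space p) = UNIV"
  by (simp add: cone_space_def space_PiM PiE_def extensional_def)

lemma prob_space_cone_space: "prob_space (cone_space p)"
  unfolding cone_space_def by (intro prob_space_PiM) (simp add: prob_space_measure_pmf)

interpretation cone: prob_space "cone_space p" for p
  by (rule prob_space_cone_space)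

lemma measure_cone_space_UNIV [simp]: "measure (cone_space p) UNIV = 1"
  using cone.prob_space[of p] by simp

lemma sets_Collect_cone_space: "Measurable.pred (cone_space p) P \<Longrightarrow> {\<omega>. P \<omega>} \<in> sets (cone_space p)"
  by (simp add: pred_def)

lemma measure_Collect_not:
  "Measurable.pred (cone_space p) P \<Longrightarrow>
    measure (cone_space p) {\<omega>. \<not> P \<omega>} = 1 - measure (cone_space p) {\<omega>. P \<omega>}"
  using cone.prob_compl[OF sets_Collect_cone_space] by (simp add: Compl_eq_Diff_UNIV[symmetric] Collect_neg_eq)

lemma measurable_component_pmf:
  "v \<in> I \<Longrightarrow> (\<lambda>\<omega>. \<omega> v) \<in> (\<Pi>\<^sub>M v\<in>I. measure_pmf p) \<rightarrow>\<^sub>M count_space UNIV"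
  using measurable_component_singleton[of v I "\<lambda>_. measure_pmf p"]
  by (simp cong: measurable_cong_sets)

lemma measurable_radius [measurable]: "(\<lambda>\<omega>. \<omega> v) \<in> cone_space p \<rightarrow>\<^sub>M count_space UNIV"
  unfolding cone_space_def by (simp add: measurable_component_pmf)

lemma measurable_subtree [measurable]: "subtree u \<in> cone_space p \<rightarrow>\<^sub>M cone_space p"
proof -
  have "(\<lambda>\<omega> s. \<omega> (u @ s)) \<in> cone_space p \<rightarrow>\<^sub>M (\<Pi>\<^sub>M s\<in>UNIV. measure_pmf p)"
    by (rule measurable_PiM_single') (simp_all add: space_PiM)
  then show ?thesis
    by (simp add: cone_space_def subtree_def[abs_def])
qed

lemma distr_subtree: "distr (cone_space p) (cone_space p) (subtree u) = cone_space p"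
proof -
  have "(\<lambda>\<omega>. \<lambda>s\<in>UNIV. \<omega> (u @ s)) = subtree u"
    by (auto simp: fun_eq_iff subtree_def)
  moreover have "distr (cone_space p) (cone_space p) (\<lambda>\<omega>. \<lambda>s\<in>UNIV. \<omega> (u @ s)) = cone_space p"
    unfolding cone_space_def
    by (rule distr_PiM_reindex[where M="\<lambda>_. measure_pmf p", simplified])
       (auto simp: prob_space_measure_pmf inj_on_def)
  ultimately show ?thesis by simp
qed

lemma measure_subtree_vimage:
  assumes "B \<in> sets (cone_space p)"
  shows "measure (cone_space p) (subtree u -` B) = measure (cone_space p) B"
  using measure_distr[OF measurable_subtree assms, of u] by (simp add: distr_subtree)

lemma measure_root_radius: "measure (cone_space p) {\<omega>. \<omega> [] = k} = pmf p k"
proof -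
  have "distr (cone_space p) (measure_pmf p) (\<lambda>\<omega>. \<omega> []) = measure_pmf p"
    unfolding cone_space_def by (rule distr_PiM_component) (auto simp: prob_space_measure_pmf)
  then show ?thesis
    using measure_distr[of "\<lambda>\<omega>. \<omega> []" "cone_space p" "measure_pmf p" "{k}"]
    by (simp add: measure_pmf_single vimage_def)
qed

lemma indep_vars_radii: "prob_space.indep_vars (cone_space p) (\<lambda>_. measure_pmf p) (\<lambda>v \<omega>. \<omega> v) UNIV"
proof -
  have "distr (cone_space p) (measure_pmf p) (\<lambda>\<omega>. \<omega> v) = measure_pmf p" for v
    unfolding cone_space_def by (rule distr_PiM_component) (auto simp: prob_space_measure_pmf)
  moreover have "distr (cone_space p) (\<Pi>\<^sub>M v\<in>UNIV. measure_pmf p) (\<lambda>\<omega>. \<lambda>v\<in>UNIV. \<omega> v)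
      = (\<Pi>\<^sub>M v\<in>UNIV. measure_pmf p)"
    by (simp add: cone_space_def distr_id2 restrict_UNIV)
  ultimately show ?thesis
    by (subst cone.indep_vars_iff_distr_eq_PiM) simp_all
qed

lemma indep_root_subtrees:
  "prob_space.indep_vars (cone_space p) (\<lambda>_. cone_space p)
     (\<lambda>j \<omega>. case j of None \<Rightarrow> (\<lambda>_. \<omega> []) | Some c \<Rightarrow> subtree [c] \<omega>) UNIV"
proof -
  define K :: "nat option \<Rightarrow> nat list set"
    where "K j = (case j of None \<Rightarrow> {[]} | Some c \<Rightarrow> {xs. xs \<noteq> [] \<and> hd xs = c})" for j
  define Y where "Y j y = (case j of None \<Rightarrow> (\<lambda>_. y []) | Some c \<Rightarrow> (\<lambda>s. y (c # s)))"
    for j and y :: "nat list \<Rightarrow> nat"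
  have "prob_space.indep_vars (cone_space p) (\<lambda>j. \<Pi>\<^sub>M v\<in>K j. measure_pmf p)
      (\<lambda>j \<omega>. restrict (\<lambda>v. \<omega> v) (K j)) UNIV"
    by (rule cone.indep_vars_restrict[OF indep_vars_radii])
       (auto simp: K_def disjoint_family_on_def split: option.splits)
  moreover have "Y j \<in> (\<Pi>\<^sub>M v\<in>K j. measure_pmf p) \<rightarrow>\<^sub>M cone_space p" for j
    unfolding cone_space_def Y_def
    by (rule measurable_PiM_single')
       (auto simp: K_def space_PiM split: option.splits intro!: measurable_component_pmf)
  ultimately have "prob_space.indep_vars (cone_space p) (\<lambda>_. cone_space p)
      (\<lambda>j \<omega>. Y j (restrict (\<lambda>v. \<omega> v) (K j))) UNIV"
    by (rule cone.indep_vars_compose2)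
  moreover have "Y j (restrict (\<lambda>v. \<omega> v) (K j))
      = (case j of None \<Rightarrow> (\<lambda>_. \<omega> []) | Some c \<Rightarrow> subtree [c] \<omega>)" for j \<omega>
    by (auto simp: Y_def K_def subtree_def fun_eq_iff split: option.splits)
  ultimately show ?thesis by simp
qed

lemma measure_root_children:
  assumes "finite C" and B: "\<And>c. c \<in> C \<Longrightarrow> B c \<in> sets (cone_space p)"
  shows "measure (cone_space p) {\<omega>. \<omega> [] = k \<and> (\<forall>c\<in>C. subtree [c] \<omega> \<in> B c)}
       = pmf p k * (\<Prod>c\<in>C. measure (cone_space p) (B c))"
proof -
  let ?X = "\<lambda>j \<omega>. case j of None \<Rightarrow> (\<lambda>_. \<omega> []) | Some c \<Rightarrow> subtree [c] \<omega>"
  define A where "A j = (case j of None \<Rightarrow> {f. f [] = k} | Some c \<Rightarrow> B c)" for j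
  have "{f. f [] = k} \<in> sets (cone_space p)"
    using measurable_sets[OF measurable_radius[of "[]" p], of "{k}"] by (simp add: vimage_def)
  then have A: "A j \<in> sets (cone_space p)" if "j \<in> insert None (Some ` C)" for j
    using that B by (auto simp: A_def)
  have "{\<omega>. \<omega> [] = k \<and> (\<forall>c\<in>C. subtree [c] \<omega> \<in> B c)}
      = (\<Inter>j\<in>insert None (Some ` C). ?X j -` A j \<inter> space (cone_space p))"
    by (auto simp: A_def)
  also have "measure (cone_space p) \<dots> = (\<Prod>j\<in>insert None (Some ` C). measure (cone_space p) (?X j -` A j))"
    using cone.indep_varsD[OF indep_root_subtrees, of "insert None (Some ` C)" A] A \<open>finite C\<close> by simp
  also have "\<dots> = measure (cone_space p) {\<omega>. \<omega> [] = k} * (\<Prod>c\<in>C. measure (cone_space p) (subtree [c] -` B c))"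
    using \<open>finite C\<close> by (simp add: prod.reindex A_def vimage_def)
  finally show ?thesis
    using B by (simp add: measure_root_radius measure_subtree_vimage cong: prod.cong)
qed

lemma sums_measure_by_root_radius:
  assumes C: "\<And>k. finite (C k)" and B: "\<And>k c. c \<in> C k \<Longrightarrow> B k c \<in> sets (cone_space p)"
  shows "(\<lambda>k. if P k then pmf p k * (\<Prod>c\<in>C k. measure (cone_space p) (B k c)) else 0)
     sums measure (cone_space p) {\<omega>. P (\<omega> []) \<and> (\<forall>c\<in>C (\<omega> []). subtree [c] \<omega> \<in> B (\<omega> []) c)}"
proof -
  define A where "A k = {\<omega>. P k \<and> \<omega> [] = k \<and> (\<forall>c\<in>C k. subtree [c] \<omega> \<in> B k c)}" for k
  have "A k \<in> sets (cone_space p)" for k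
  proof -
    have [measurable]: "Measurable.pred (cone_space p) (\<lambda>\<omega>. subtree [c] \<omega> \<in> B k c)" if "c \<in> C k" for c
      using pred_sets2[OF B[OF that] measurable_subtree] .
    have "Measurable.pred (cone_space p) (\<lambda>\<omega>. P k \<and> \<omega> [] = k \<and> (\<forall>c\<in>C k. subtree [c] \<omega> \<in> B k c))"
      using C by measurable
    then show ?thesis by (simp add: A_def pred_def)
  qed
  then have "(\<lambda>k. measure (cone_space p) (A k)) sums measure (cone_space p) (\<Union>k. A k)"
    by (intro cone.finite_measure_UNION) (auto simp: disjoint_family_on_def A_def)
  moreover have "measure (cone_space p) (A k)
      = (if P k then pmf p k * (\<Prod>c\<in>C k. measure (cone_space p) (B k c)) else 0)" for k
    using measure_root_children[OF C B] by (simp add: A_def)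
  moreover have "(\<Union>k. A k) = {\<omega>. P (\<omega> []) \<and> (\<forall>c\<in>C (\<omega> []). subtree [c] \<omega> \<in> B (\<omega> []) c)}"
    by (auto simp: A_def)
  ultimately show ?thesis by simp
qed

lemma measure_children:
  assumes "finite C" "\<And>c. c \<in> C \<Longrightarrow> B c \<in> sets (cone_space p)"
  shows "measure (cone_space p) {\<omega>. \<forall>c\<in>C. subtree [c] \<omega> \<in> B c} = (\<Prod>c\<in>C. measure (cone_space p) (B c))"
proof -
  have "(\<lambda>k. pmf p k * (\<Prod>c\<in>C. measure (cone_space p) (B c)))
      sums measure (cone_space p) {\<omega>. \<forall>c\<in>C. subtree [c] \<omega> \<in> B c}"
    using sums_measure_by_root_radius[of "\<lambda>_. C" "\<lambda>_. B" p "\<lambda>_. True"] assms by simp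
  moreover have "(\<lambda>k. pmf p k * (\<Prod>c\<in>C. measure (cone_space p) (B c))) sums (\<Prod>c\<in>C. measure (cone_space p) (B c))"
    using sums_mult2[OF sums_pmf] by simp
  ultimately show ?thesis
    by (rule sums_unique2)
qed

lemma measure_root_radius_le:
  assumes "finite C" "\<And>k c. c \<in> C \<Longrightarrow> B k c \<in> sets (cone_space p)"
  shows "measure (cone_space p) {\<omega>. \<omega> [] \<le> h \<and> (\<forall>c\<in>C. subtree [c] \<omega> \<in> B (\<omega> []) c)}
       = (\<Sum>k\<le>h. pmf p k * (\<Prod>c\<in>C. measure (cone_space p) (B k c)))"
proof -
  have "(\<lambda>k. if k \<le> h then pmf p k * (\<Prod>c\<in>C. measure (cone_space p) (B k c)) else 0)
      sums measure (cone_space p) {\<omega>. \<omega> [] \<le> h \<and> (\<forall>c\<in>C. subtree [c] \<omega> \<in> B (\<omega> []) c)}"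
    using sums_measure_by_root_radius[of "\<lambda>_. C" B p "\<lambda>k. k \<le> h"] assms by simp
  moreover have "(\<lambda>k. if k \<le> h then pmf p k * (\<Prod>c\<in>C. measure (cone_space p) (B k c)) else 0)
      sums (\<Sum>k\<le>h. pmf p k * (\<Prod>c\<in>C. measure (cone_space p) (B k c)))"
    using sums_If_finite_set[of "{..h}"] by simp
  ultimately show ?thesis
    by (rule sums_unique2)
qed

lemma measurable_cone_gen [measurable]: "Measurable.pred (cone_space p) (\<lambda>\<omega>. v \<in> cone_gen d \<omega> n)"
proof (induction n arbitrary: v)
  case (Suc n)
  have "(\<lambda>\<omega>. v \<in> cone_gen d \<omega> (Suc n))
      = (\<lambda>\<omega>. \<exists>u. u \<in> cone_gen d \<omega> n \<and> tree_vertex d v \<and> prefix u v \<and> length v - length u \<le> \<omega> u)"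
    by (auto simp: fun_eq_iff cone_def)
  moreover note Suc.IH [measurable]
  ultimately show ?case by simp
qed simp

lemma tree_vertex_cone_gen: "v \<in> cone_gen d \<omega> n \<Longrightarrow> tree_vertex d v"
  by (induction n arbitrary: v) (auto simp: tree_vertex_def cone_def)

lemma tree_vertex_set: "tree_vertex d v \<Longrightarrow> set v \<subseteq> {..d}"
  by (cases v) (auto simp: tree_vertex_def)

lemma infinite_cone_cluster_iff:
  "infinite (cone_cluster d \<omega>) \<longleftrightarrow> (\<forall>N. \<exists>v\<in>cone_cluster d \<omega>. N \<le> length v)"
proof
  assume inf: "infinite (cone_cluster d \<omega>)"
  show "\<forall>N. \<exists>v\<in>cone_cluster d \<omega>. N \<le> length v"
  proof (rule ccontr)
    assume "\<not> ?thesis"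
    then obtain N where "\<forall>v\<in>cone_cluster d \<omega>. length v \<le> N"
      using less_imp_le by (auto simp: not_le)
    then have "cone_cluster d \<omega> \<subseteq> {xs. set xs \<subseteq> {..d} \<and> length xs \<le> N}"
      using tree_vertex_set[OF tree_vertex_cone_gen] unfolding cone_cluster_def by blast
    moreover have "finite {xs. set xs \<subseteq> {..d} \<and> length xs \<le> N}"
      by (rule finite_lists_length_le) simp
    ultimately show False
      using inf finite_subset by blast
  qed
next
  assume unbounded: "\<forall>N. \<exists>v\<in>cone_cluster d \<omega>. N \<le> length v"
  show "infinite (cone_cluster d \<omega>)"
  proof
    assume "finite (cone_cluster d \<omega>)"
    moreover obtain v where "v \<in> cone_cluster d \<omega>" "Suc (Max (length ` cone_cluster d \<omega>)) \<le> length v"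
      using unbounded by blast
    ultimately show False
      by (metis Max_ge Suc_n_not_le_n finite_imageI image_eqI le_trans)
  qed
qed

lemma survival_eq: "survival d p = {\<omega>. \<forall>N. \<exists>n. \<exists>v\<in>cone_gen d \<omega> n. N \<le> length v}"
  unfolding survival_def infinite_cone_cluster_iff by (auto simp: cone_cluster_def)

lemma sets_survival [measurable]: "survival d p \<in> sets (cone_space p)"
proof -
  have "Measurable.pred (cone_space p) (\<lambda>\<omega>. \<forall>N. \<exists>n v. v \<in> cone_gen d \<omega> n \<and> N \<le> length v)"
    by measurable
  then show ?thesis
    by (simp add: survival_eq pred_def Bex_def)
qed

section \<open>Lower bound: chains of full jumps\<close>

text \<open>\<open>jumps d n m \<omega>\<close>: some vertex at depth \<open>m\<close> of the \<open>d\<close>-ary subtree below the root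
  (children \<open>0..d-1\<close>) starts a chain of \<open>n\<close> jumps, each from a vertex \<open>u\<close> with \<open>R\<^sub>u > 0\<close> to a
  vertex at distance exactly \<open>R\<^sub>u\<close> below \<open>u\<close>, again within the \<open>d\<close>-ary subtree.\<close>

fun jumps :: "nat \<Rightarrow> nat \<Rightarrow> nat \<Rightarrow> (nat list \<Rightarrow> nat) \<Rightarrow> bool" where
  "jumps d n (Suc m) \<omega> = (\<exists>c<d. jumps d n m (subtree [c] \<omega>))"
| "jumps d 0 0 \<omega> = True"
| "jumps d (Suc n) 0 \<omega> = (\<omega> [] \<noteq> 0 \<and> jumps d n (\<omega> []) \<omega>)"

fun root_jumps :: "nat \<Rightarrow> nat \<Rightarrow> (nat list \<Rightarrow> nat) \<Rightarrow> bool" where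
  "root_jumps d 0 \<omega> = True"
| "root_jumps d (Suc n) \<omega> = (\<omega> [] \<noteq> 0 \<and> (\<exists>c\<le>d. jumps d n (\<omega> [] - 1) (subtree [c] \<omega>)))"

lemma measurable_jumps [measurable]: "Measurable.pred (cone_space p) (jumps d n m)"
proof (induction n arbitrary: m)
  case 0
  show ?case
    by (induction m) simp_all
next
  case (Suc n)
  note Suc.IH [measurable]
  show ?case
    by (induction m) simp_all
qed

lemma measurable_root_jumps [measurable]: "Measurable.pred (cone_space p) (root_jumps d n)"
proof (cases n)
  case 0
  then have "root_jumps d n = (\<lambda>_. True)"
    by (simp add: fun_eq_iff)
  then show ?thesis by simp
next
  case (Suc n')
  have "root_jumps d n = (\<lambda>\<omega>. \<omega> [] \<noteq> 0 \<and> (\<exists>c\<le>d. jumps d n' (\<omega> [] - 1) (subtree [c] \<omega>)))"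
    by (simp add: Suc fun_eq_iff)
  then show ?thesis by simp
qed

lemma tree_vertex_append:
  "tree_vertex d x \<Longrightarrow> x \<noteq> [] \<Longrightarrow> set s \<subseteq> {..<d} \<Longrightarrow> tree_vertex d (x @ s)"
  by (cases x) (auto simp: tree_vertex_def)

lemma jumps_walk:
  "jumps d n m (subtree x \<omega>) \<Longrightarrow>
    \<exists>s. length s = m \<and> set s \<subseteq> {..<d} \<and> jumps d n 0 (subtree (x @ s) \<omega>)"
proof (induction m arbitrary: x)
  case (Suc m)
  then obtain c where "c < d" "jumps d n m (subtree (x @ [c]) \<omega>)"
    by auto
  with Suc.IH obtain s where "length s = m" "set s \<subseteq> {..<d}" "jumps d n 0 (subtree (x @ c # s) \<omega>)"
    by fastforce
  with \<open>c < d\<close> show ?case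
    by (intro exI[of _ "c # s"]) auto
qed auto

lemma cone_gen_jumps:
  assumes "jumps d n 0 (subtree x \<omega>)" "x \<noteq> []" "tree_vertex d x" "x \<in> cone_gen d \<omega> M"
  shows "\<exists>y\<in>cone_gen d \<omega> (M + n). length x + n \<le> length y"
  using assms
proof (induction n arbitrary: x M)
  case (Suc n)
  then have "\<omega> x \<noteq> 0" "jumps d n (\<omega> x) (subtree x \<omega>)"
    by auto
  with jumps_walk obtain s where s: "length s = \<omega> x" "set s \<subseteq> {..<d}" "jumps d n 0 (subtree (x @ s) \<omega>)"
    by blast
  with Suc.prems have tv: "tree_vertex d (x @ s)"
    by (simp add: tree_vertex_append)
  with s(1) Suc.prems(4) have "x @ s \<in> cone_gen d \<omega> (Suc M)"
    by (auto simp: cone_def intro!: bexI[of _ x])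
  with Suc.IH[OF s(3)] Suc.prems(2) tv obtain y
    where "y \<in> cone_gen d \<omega> (Suc M + n)" "length (x @ s) + n \<le> length y"
    by blast
  with \<open>\<omega> x \<noteq> 0\<close> s(1) show ?case
    by (intro bexI[of _ y]) auto
qed auto

lemma root_jumps_deep:
  assumes "root_jumps d (Suc n) \<omega>"
  shows "\<exists>y\<in>cone_gen d \<omega> (Suc n). Suc n \<le> length y"
proof -
  obtain c where c: "\<omega> [] \<noteq> 0" "c \<le> d" "jumps d n (\<omega> [] - 1) (subtree [c] \<omega>)"
    using assms by auto
  with jumps_walk obtain s where s: "length s = \<omega> [] - 1" "set s \<subseteq> {..<d}" "jumps d n 0 (subtree (c # s) \<omega>)"
    by fastforce
  with c have "tree_vertex d (c # s)" "c # s \<in> cone_gen d \<omega> 1"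
    by (auto simp: tree_vertex_def cone_def)
  with cone_gen_jumps[OF s(3)] obtain y where "y \<in> cone_gen d \<omega> (Suc n)" "Suc n \<le> length y"
    by fastforce
  then show ?thesis by blast
qed

lemma root_jumps_survival: "(\<And>n. root_jumps d n \<omega>) \<Longrightarrow> \<omega> \<in> survival d p"
  unfolding survival_eq using root_jumps_deep by (blast intro: Suc_leD)

lemma jumps_Suc_imp: "0 < d \<Longrightarrow> jumps d (Suc n) m \<omega> \<Longrightarrow> jumps d n m \<omega>"
proof (induction n arbitrary: m \<omega>)
  case 0
  then show ?case
    by (induction m arbitrary: \<omega>) auto
next
  case (Suc n)
  then show ?case
    by (induction m arbitrary: \<omega>) auto
qed

lemma root_jumps_Suc_imp: "0 < d \<Longrightarrow> root_jumps d (Suc n) \<omega> \<Longrightarrow> root_jumps d n \<omega>"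
  by (cases n) (auto dest: jumps_Suc_imp)

definition jump_failure :: "nat \<Rightarrow> nat pmf \<Rightarrow> nat \<Rightarrow> real" where
  "jump_failure d p n = measure (cone_space p) {\<omega>. \<not> jumps d n 0 \<omega>}"

lemma measure_not_jumps:
  "measure (cone_space p) {\<omega>. \<not> jumps d n m \<omega>} = jump_failure d p n ^ (d ^ m)"
proof (induction m)
  case (Suc m)
  have "{\<omega>. \<not> jumps d n (Suc m) \<omega>} = {\<omega>. \<forall>c\<in>{..<d}. subtree [c] \<omega> \<in> {\<omega>. \<not> jumps d n m \<omega>}}"
    by auto
  also have "measure (cone_space p) \<dots> = (\<Prod>c\<in>{..<d}. measure (cone_space p) {\<omega>. \<not> jumps d n m \<omega>})"
    by (rule measure_children) (simp_all add: sets_Collect_cone_space)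
  finally show ?case
    using Suc by (simp add: power_mult[symmetric] mult.commute)
qed (simp add: jump_failure_def)

lemma sums_jump_failure_Suc:
  "(\<lambda>k. pmf p k * (if k = 0 then 1 else jump_failure d p n ^ (d ^ k))) sums jump_failure d p (Suc n)"
proof -
  let ?C = "\<lambda>k. if k = 0 then {} else {..<d}"
  let ?B = "\<lambda>k. {\<omega>. \<not> jumps d n (k - 1) \<omega>}"
  have "{\<omega>. \<not> jumps d (Suc n) 0 \<omega>} = {\<omega>. \<forall>c\<in>?C (\<omega> []). subtree [c] \<omega> \<in> ?B (\<omega> [])}"
    by (auto simp: gr0_conv_Suc)
  then have "(\<lambda>k. pmf p k * (\<Prod>c\<in>?C k. measure (cone_space p) (?B k))) sums jump_failure d p (Suc n)"
    using sums_measure_by_root_radius[of ?C "\<lambda>k _. ?B k" p "\<lambda>_. True"]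
    by (simp add: jump_failure_def sets_Collect_cone_space)
  moreover have "(\<Prod>c\<in>?C k. measure (cone_space p) (?B k))
      = (if k = 0 then 1 else jump_failure d p n ^ (d ^ k))" for k
    by (cases k) (simp_all add: measure_not_jumps power_mult[symmetric] mult.commute)
  ultimately show ?thesis by simp
qed

lemma sums_not_root_jumps:
  "(\<lambda>k. pmf p k * (if k = 0 then 1 else jump_failure d p n ^ (d ^ (k - 1) * Suc d)))
    sums measure (cone_space p) {\<omega>. \<not> root_jumps d (Suc n) \<omega>}"
proof -
  let ?C = "\<lambda>k. if k = 0 then {} else {..d}"
  let ?B = "\<lambda>k. {\<omega>. \<not> jumps d n (k - 1) \<omega>}"
  have "{\<omega>. \<not> root_jumps d (Suc n) \<omega>} = {\<omega>. \<forall>c\<in>?C (\<omega> []). subtree [c] \<omega> \<in> ?B (\<omega> [])}"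
    by auto
  then have "(\<lambda>k. pmf p k * (\<Prod>c\<in>?C k. measure (cone_space p) (?B k)))
      sums measure (cone_space p) {\<omega>. \<not> root_jumps d (Suc n) \<omega>}"
    using sums_measure_by_root_radius[of ?C "\<lambda>k _. ?B k" p "\<lambda>_. True"]
    by (simp add: sets_Collect_cone_space)
  moreover have "(\<Prod>c\<in>?C k. measure (cone_space p) (?B k))
      = (if k = 0 then 1 else jump_failure d p n ^ (d ^ (k - 1) * Suc d))" for k
    by (simp add: measure_not_jumps power_mult del: mult_Suc_right)
  ultimately show ?thesis by simp
qed

text \<open>The failure probabilities iterate \<open>x \<mapsto> p\<^sub>0 + \<Sum>\<^sub>k\<^sub>>\<^sub>0 p\<^sub>k x^(d^k)\<close> from \<open>0\<close>, so they stay
  below each of its fixed points.\<close>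

lemma jump_failure_le:
  assumes "0 \<le> \<rho>" and \<rho>: "(\<lambda>k. pmf p k * (if k = 0 then 1 else \<rho> ^ (d ^ k))) sums \<rho>"
  shows "jump_failure d p n \<le> \<rho>"
proof (induction n)
  case 0
  then show ?case
    using assms by (simp add: jump_failure_def)
next
  case (Suc n)
  have "0 \<le> jump_failure d p n"
    by (simp add: jump_failure_def)
  with Suc show ?case
    by (intro sums_le[OF _ sums_jump_failure_Suc \<rho>]) (auto intro!: mult_left_mono power_mono)
qed

lemma measure_survival_ge:
  assumes "0 < d" "0 \<le> \<rho>"
    and \<rho>: "(\<lambda>k. pmf p k * (if k = 0 then 1 else \<rho> ^ (d ^ k))) sums \<rho>"
    and Q: "(\<lambda>k. pmf p k * (if k = 0 then 1 else \<rho> ^ (d ^ (k - 1) * Suc d))) sums Q"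
  shows "1 - Q \<le> measure (cone_space p) (survival d p)"
proof -
  have not_bound: "measure (cone_space p) {\<omega>. \<not> root_jumps d (Suc n) \<omega>} \<le> Q" for n
    using jump_failure_le[OF assms(2) \<rho>, of n]
    by (intro sums_le[OF _ sums_not_root_jumps Q])
       (auto intro!: mult_left_mono power_mono simp: jump_failure_def)
  then have bound: "1 - Q \<le> measure (cone_space p) {\<omega>. root_jumps d (Suc n) \<omega>}" for n
    using not_bound[of n] measure_Collect_not[OF measurable_root_jumps, of p d "Suc n"] by linarith
  let ?A = "\<lambda>n. {\<omega>. root_jumps d n \<omega>}"
  have "decseq ?A"
    using \<open>0 < d\<close> root_jumps_Suc_imp by (intro decseq_SucI) blast
  then have "(\<lambda>n. measure (cone_space p) (?A n)) \<longlonglongrightarrow> measure (cone_space p) (\<Inter>n. ?A n)"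
    by (intro cone.finite_Lim_measure_decseq) (auto simp: sets_Collect_cone_space)
  then have "(\<lambda>n. measure (cone_space p) (?A (Suc n))) \<longlonglongrightarrow> measure (cone_space p) (\<Inter>n. ?A n)"
    by (rule LIMSEQ_Suc)
  then have "1 - Q \<le> measure (cone_space p) (\<Inter>n. ?A n)"
    using bound by (intro LIMSEQ_le_const) auto
  also have "\<dots> \<le> measure (cone_space p) (survival d p)"
    using root_jumps_survival by (intro cone.finite_measure_mono) auto
  finally show ?thesis .
qed

lemma full_jump_exponent:
  "0 < d \<Longrightarrow> 0 < k \<Longrightarrow> (real d + 1) / real d * real d ^ k = real (d ^ (k - 1) * Suc d)"
  by (cases k) (simp_all add: field_simps)

lemma measure_survival_ge_rho:
  fixes \<rho> :: real
  assumes d: "0 < d" and p0: "0 < pmf p 0" and "0 \<le> \<rho>"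
    and rho_root: "measure_pmf.expectation p (\<lambda>k. \<rho> ^ (d ^ k)) + (1 - \<rho>) * pmf p 0 = \<rho>"
    and rho_least: "\<And>x. x \<ge> 0 \<Longrightarrow>
        measure_pmf.expectation p (\<lambda>k. x ^ (d ^ k)) + (1 - x) * pmf p 0 = x \<Longrightarrow> \<rho> \<le> x"
  shows "1 - (1 - \<rho> powr ((real d + 1) / real d)) * pmf p 0
           - measure_pmf.expectation p (\<lambda>k. \<rho> powr ((real d + 1) / real d * real d ^ k))
         \<le> measure (cone_space p) (survival d p)"
proof -
  define c where "c = (real d + 1) / real d"
  have "\<rho> \<le> 1"
    using rho_least[of 1] by simp
  have "0 < \<rho>"
    using rho_root p0 \<open>0 \<le> \<rho>\<close> pmf_expectation_zero_power[of "\<lambda>k. d ^ k" p] d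
    by (cases "\<rho> = 0") auto
  have "(\<lambda>k. pmf p k * (if k = 0 then 1 else \<rho> ^ (d ^ k))) sums \<rho>"
    using sums_pmf_expectation_modify_0[of "\<lambda>k. \<rho> ^ (d ^ k)" 1 "\<lambda>k. if k = 0 then 1 else \<rho> ^ (d ^ k)" p]
      \<open>0 \<le> \<rho>\<close> \<open>\<rho> \<le> 1\<close> rho_root by (simp add: power_le_one algebra_simps)
  moreover have "(\<lambda>k. pmf p k * (if k = 0 then 1 else \<rho> ^ (d ^ (k - 1) * Suc d)))
      sums (measure_pmf.expectation p (\<lambda>k. \<rho> powr (c * real d ^ k)) + pmf p 0 * (1 - \<rho> powr c))"
  proof -
    have "\<bar>\<rho> powr (c * real d ^ k)\<bar> \<le> 1" for k
      using \<open>0 \<le> \<rho>\<close> \<open>\<rho> \<le> 1\<close> d by (simp add: c_def powr_le1)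
    moreover have "\<rho> ^ (d ^ (k - 1) * Suc d) = \<rho> powr (c * real d ^ k)" if "0 < k" for k
      by (simp only: c_def full_jump_exponent[OF d that] powr_realpow[OF \<open>0 < \<rho>\<close>])
    ultimately show ?thesis
      using sums_pmf_expectation_modify_0[of "\<lambda>k. \<rho> powr (c * real d ^ k)" 1
          "\<lambda>k. if k = 0 then 1 else \<rho> ^ (d ^ (k - 1) * Suc d)" p]
      by simp
  qed
  ultimately have "1 - (measure_pmf.expectation p (\<lambda>k. \<rho> powr (c * real d ^ k)) + pmf p 0 * (1 - \<rho> powr c))
      \<le> measure (cone_space p) (survival d p)"
    by (rule measure_survival_ge[OF d \<open>0 \<le> \<rho>\<close>])
  then show ?thesis
    by (simp add: c_def algebra_simps)
qed

section \<open>Upper bound: reaching a given depth\<close>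

text \<open>\<open>reaches_depth d j h \<omega>\<close>: inside the \<open>d\<close>-ary subtree below the root, whose first \<open>j\<close> levels
  are covered by the cones of the ancestors (\<open>j = 0\<close>: the root is not reached), the process
  reaches depth \<open>h\<close>.\<close>

fun reaches_depth :: "nat \<Rightarrow> nat \<Rightarrow> nat \<Rightarrow> (nat list \<Rightarrow> nat) \<Rightarrow> bool" where
  "reaches_depth d 0 h \<omega> = False"
| "reaches_depth d (Suc j) 0 \<omega> = True"
| "reaches_depth d (Suc j) (Suc h) \<omega> =
    (Suc h \<le> \<omega> [] \<or> (\<exists>c<d. reaches_depth d (max (\<omega> []) j) h (subtree [c] \<omega>)))"

fun root_reaches_depth :: "nat \<Rightarrow> nat \<Rightarrow> (nat list \<Rightarrow> nat) \<Rightarrow> bool" where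
  "root_reaches_depth d 0 \<omega> = True"
| "root_reaches_depth d (Suc h) \<omega> = (Suc h \<le> \<omega> [] \<or> (\<exists>c\<le>d. reaches_depth d (\<omega> []) h (subtree [c] \<omega>)))"

lemma measurable_reaches_depth [measurable]: "Measurable.pred (cone_space p) (reaches_depth d j h)"
proof (induction h arbitrary: j)
  case 0
  show ?case
    by (cases j) (simp_all add: fun_eq_iff)
next
  case (Suc h)
  note Suc.IH [measurable]
  show ?case
    by (cases j) (simp_all add: fun_eq_iff)
qed

lemma measurable_root_reaches_depth [measurable]:
  "Measurable.pred (cone_space p) (root_reaches_depth d h)"
proof (cases h)
  case 0
  then have "root_reaches_depth d h = (\<lambda>_. True)"
    by (simp add: fun_eq_iff)
  then show ?thesis by simp
next
  case (Suc h')
  then have "root_reaches_depth d h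
      = (\<lambda>\<omega>. Suc h' \<le> \<omega> [] \<or> (\<exists>c\<le>d. reaches_depth d (\<omega> []) h' (subtree [c] \<omega>)))"
    by (simp add: fun_eq_iff)
  then show ?thesis by simp
qed

lemma reaches_depth_mono: "reaches_depth d j h \<omega> \<Longrightarrow> j \<le> j' \<Longrightarrow> reaches_depth d j' h \<omega>"
proof (induction d j h \<omega> arbitrary: j' rule: reaches_depth.induct)
  case (3 d j h \<omega>)
  then obtain i where "j' = Suc i" "j \<le> i"
    by (cases j') auto
  with 3 show ?case
    by (auto simp del: max_less_iff_conj)
qed (auto dest: Suc_le_D)

lemma reaches_depth_intro:
  "set s \<subseteq> {..<d} \<Longrightarrow> length s < j \<Longrightarrow> reaches_depth d 1 (h - length s) (subtree (z @ s) \<omega>) \<Longrightarrow>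
    reaches_depth d j h (subtree z \<omega>)"
proof (induction s arbitrary: z j h)
  case Nil
  then show ?case
    by (auto intro: reaches_depth_mono)
next
  case (Cons c s)
  then obtain i where j: "j = Suc i"
    by (cases j) auto
  show ?case
  proof (cases h)
    case (Suc g)
    with Cons j have "reaches_depth d i g (subtree (z @ [c]) \<omega>)"
      by auto
    then have "reaches_depth d (max (\<omega> z) i) g (subtree (z @ [c]) \<omega>)"
      by (rule reaches_depth_mono) simp
    with Cons.prems(1) show ?thesis
      by (auto simp: j Suc)
  qed (simp add: j)
qed

inductive cone_path :: "nat \<Rightarrow> (nat list \<Rightarrow> nat) \<Rightarrow> nat list \<Rightarrow> nat list \<Rightarrow> bool" for d \<omega> where
  cone_path_refl: "cone_path d \<omega> x x"
| cone_path_step: "t \<noteq> [] \<Longrightarrow> length t \<le> \<omega> x \<Longrightarrow> set t \<subseteq> {..<d} \<Longrightarrow> cone_path d \<omega> (x @ t) y \<Longrightarrow>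
    cone_path d \<omega> x y"

lemma cone_path_prefix: "cone_path d \<omega> x y \<Longrightarrow> \<exists>r. y = x @ r"
  by (induction rule: cone_path.induct) auto

lemma cone_path_snoc:
  "cone_path d \<omega> x u \<Longrightarrow> t \<noteq> [] \<Longrightarrow> length t \<le> \<omega> u \<Longrightarrow> set t \<subseteq> {..<d} \<Longrightarrow>
    cone_path d \<omega> x (u @ t)"
  by (induction rule: cone_path.induct) (auto intro: cone_path.intros)

lemma cone_path_reaches_depth:
  "cone_path d \<omega> x y \<Longrightarrow> h \<le> length y - length x \<Longrightarrow> reaches_depth d 1 h (subtree x \<omega>)"
proof (induction arbitrary: h rule: cone_path.induct)
  case (cone_path_step t x y)
  show ?case
  proof (cases h)
    case (Suc g)
    obtain c t' where t: "t = c # t'"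
      using \<open>t \<noteq> []\<close> by (cases t) auto
    obtain r where "y = x @ t @ r"
      using cone_path_prefix[OF cone_path_step.hyps(4)] by auto
    with cone_path_step.prems Suc t have "g - length t' \<le> length y - length (x @ t)"
      by auto
    with cone_path_step.IH t have "reaches_depth d 1 (g - length t') (subtree ((x @ [c]) @ t') \<omega>)"
      by simp
    with cone_path_step.hyps(2,3) t have "reaches_depth d (\<omega> x) g (subtree (x @ [c]) \<omega>)"
      by (auto intro: reaches_depth_intro)
    with cone_path_step.hyps(3) t show ?thesis
      by (auto simp: Suc)
  qed simp
qed simp

lemma cone_gen_cone_path:
  assumes "v \<in> cone_gen d \<omega> n" "v \<noteq> []"
  shows "\<exists>c t. c \<le> d \<and> set t \<subseteq> {..<d} \<and> length t < \<omega> [] \<and> cone_path d \<omega> (c # t) v"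
  using assms
proof (induction n arbitrary: v)
  case (Suc n)
  then obtain u where u: "u \<in> cone_gen d \<omega> n" "v \<in> cone d \<omega> u"
    by auto
  then have tv: "tree_vertex d v" and "prefix u v" and len: "length v - length u \<le> \<omega> u"
    by (auto simp: cone_def)
  then obtain t where v: "v = u @ t"
    by (auto simp: prefix_def)
  show ?case
  proof (cases "u = []")
    case True
    with Suc.prems(2) tv len v obtain c t' where "v = c # t'" "c \<le> d" "set t' \<subseteq> {..<d}" "length t' < \<omega> []"
      by (cases v) (auto simp: tree_vertex_def subset_iff)
    then show ?thesis
      by (blast intro: cone_path_refl)
  next
    case False
    with Suc.IH u(1) obtain c t' where ct: "c \<le> d" "set t' \<subseteq> {..<d}" "length t' < \<omega> []"
      "cone_path d \<omega> (c # t') u"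
      by blast
    show ?thesis
    proof (cases "t = []")
      case False
      obtain r where "u = c # t' @ r"
        using cone_path_prefix[OF ct(4)] by auto
      with tv v have "set t \<subseteq> {..<d}"
        by (auto simp: tree_vertex_def)
      with ct(4) False len v have "cone_path d \<omega> (c # t') v"
        by (auto intro: cone_path_snoc)
      with ct show ?thesis
        by blast
    qed (use ct v in auto)
  qed
qed simp

lemma survival_root_reaches_depth: "\<omega> \<in> survival d p \<Longrightarrow> root_reaches_depth d h \<omega>"
proof (cases h)
  case (Suc g)
  assume "\<omega> \<in> survival d p"
  then obtain n v where v: "v \<in> cone_gen d \<omega> n" "Suc g \<le> length v"
    unfolding survival_eq by blast
  then obtain c t where ct: "c \<le> d" "set t \<subseteq> {..<d}" "length t < \<omega> []" "cone_path d \<omega> (c # t) v"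
    using cone_gen_cone_path[of v] by fastforce
  have "reaches_depth d 1 (g - length t) (subtree ([c] @ t) \<omega>)"
    using cone_path_reaches_depth[OF ct(4)] v(2) by simp
  with ct have "reaches_depth d (\<omega> []) g (subtree [c] \<omega>)"
    by (auto intro: reaches_depth_intro)
  with ct(1) show ?thesis
    by (auto simp: Suc)
qed simp

definition reach_prob :: "nat \<Rightarrow> nat pmf \<Rightarrow> nat \<Rightarrow> nat \<Rightarrow> real" where
  "reach_prob d p j h = measure (cone_space p) {\<omega>. reaches_depth d j h \<omega>}"

lemma measure_not_reaches_depth:
  "measure (cone_space p) {\<omega>. \<not> reaches_depth d j h \<omega>} = 1 - reach_prob d p j h"
  unfolding reach_prob_def by (rule measure_Collect_not) simp

lemma one_minus_reach_prob_Suc: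
  "1 - reach_prob d p (Suc j) (Suc h) = (\<Sum>k\<le>h. pmf p k * (1 - reach_prob d p (max k j) h) ^ d)"
proof -
  let ?B = "\<lambda>k. {\<omega>. \<not> reaches_depth d (max k j) h \<omega>}"
  have "1 - reach_prob d p (Suc j) (Suc h) = measure (cone_space p) {\<omega>. \<not> reaches_depth d (Suc j) (Suc h) \<omega>}"
    by (rule measure_not_reaches_depth[symmetric])
  also have "{\<omega>. \<not> reaches_depth d (Suc j) (Suc h) \<omega>}
      = {\<omega>. \<omega> [] \<le> h \<and> (\<forall>c\<in>{..<d}. subtree [c] \<omega> \<in> ?B (\<omega> []))}"
    by auto
  also have "measure (cone_space p) \<dots> = (\<Sum>k\<le>h. pmf p k * (\<Prod>c\<in>{..<d}. measure (cone_space p) (?B k)))"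
    by (rule measure_root_radius_le) (simp_all add: sets_Collect_cone_space)
  finally show ?thesis
    by (simp add: measure_not_reaches_depth)
qed

lemma one_minus_root_reach_prob:
  "1 - measure (cone_space p) {\<omega>. root_reaches_depth d (Suc h) \<omega>}
    = (\<Sum>k\<le>h. pmf p k * (1 - reach_prob d p k h) ^ Suc d)"
proof -
  let ?B = "\<lambda>k. {\<omega>. \<not> reaches_depth d k h \<omega>}"
  have "1 - measure (cone_space p) {\<omega>. root_reaches_depth d (Suc h) \<omega>}
      = measure (cone_space p) {\<omega>. \<not> root_reaches_depth d (Suc h) \<omega>}"
    by (rule measure_Collect_not[OF measurable_root_reaches_depth, symmetric])
  also have "{\<omega>. \<not> root_reaches_depth d (Suc h) \<omega>}
      = {\<omega>. \<omega> [] \<le> h \<and> (\<forall>c\<in>{..d}. subtree [c] \<omega> \<in> ?B (\<omega> []))}"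
    by auto
  also have "measure (cone_space p) \<dots> = (\<Sum>k\<le>h. pmf p k * (\<Prod>c\<in>{..d}. measure (cone_space p) (?B k)))"
    by (rule measure_root_radius_le) (simp_all add: sets_Collect_cone_space)
  finally show ?thesis
    by (simp add: measure_not_reaches_depth)
qed

text \<open>Lower bounds for the probability of not reaching depth \<open>h\<close>: \<open>nonreach_lb d p h\<close> from a
  vertex covered only by its own cone, \<open>nonreach_lb_cov d p j h\<close> from one whose first \<open>j\<close>
  levels are covered, treating the \<open>d^i\<close> vertices at covered level \<open>i\<close> as independent
  fresh starts.\<close>

fun nonreach_lb :: "nat \<Rightarrow> nat pmf \<Rightarrow> nat \<Rightarrow> real" where
  "nonreach_lb d p 0 = 0"
| "nonreach_lb d p (Suc h) = (\<Sum>k\<le>h. pmf p k * (\<Prod>i<k. nonreach_lb d p (h - i) ^ (d ^ i)) ^ d)"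

definition nonreach_lb_cov :: "nat \<Rightarrow> nat pmf \<Rightarrow> nat \<Rightarrow> nat \<Rightarrow> real" where
  "nonreach_lb_cov d p j h = (\<Prod>i<j. nonreach_lb d p (h - i) ^ (d ^ i))"

lemma nonreach_lb_Suc: "nonreach_lb d p (Suc h) = (\<Sum>k\<le>h. pmf p k * nonreach_lb_cov d p k h ^ d)"
  by (simp add: nonreach_lb_cov_def)

lemma nonreach_lb_bounds: "0 \<le> nonreach_lb d p h \<and> nonreach_lb d p h \<le> 1"
proof (induction h rule: less_induct)
  case (less h)
  show ?case
  proof (cases h)
    case (Suc g)
    have cov: "0 \<le> nonreach_lb_cov d p k g \<and> nonreach_lb_cov d p k g \<le> 1" for k
      unfolding nonreach_lb_cov_def using less Suc
      by (auto intro!: prod_nonneg prod_le_1 zero_le_power power_le_one)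
    then have "(\<Sum>k\<le>g. pmf p k * nonreach_lb_cov d p k g ^ d) \<le> (\<Sum>k\<le>g. pmf p k)"
      by (intro sum_mono mult_right_le_one_le) (auto intro: power_le_one)
    also have "\<dots> \<le> 1"
      by (simp add: sum_pmf_le_1)
    finally show ?thesis
      unfolding Suc nonreach_lb_Suc using cov by (auto intro!: sum_nonneg)
  qed simp
qed

lemma nonreach_lb_cov_bounds: "0 \<le> nonreach_lb_cov d p j h" "nonreach_lb_cov d p j h \<le> 1"
  unfolding nonreach_lb_cov_def using nonreach_lb_bounds
  by (auto intro!: prod_nonneg prod_le_1 zero_le_power power_le_one)

lemma nonreach_lb_mono: "nonreach_lb d p h \<le> nonreach_lb d p (Suc h)"
proof (induction h rule: less_induct)
  case (less h)
  show ?case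
  proof (cases h)
    case 0
    then show ?thesis
      using nonreach_lb_bounds[of d p 1] by simp
  next
    case (Suc g)
    have "nonreach_lb d p (g - i) \<le> nonreach_lb d p (Suc g - i)" for i
      using less[of "g - i"] Suc by (cases "i \<le> g") (simp_all add: Suc_diff_le)
    then have "nonreach_lb_cov d p k g \<le> nonreach_lb_cov d p k (Suc g)" for k
      unfolding nonreach_lb_cov_def using nonreach_lb_bounds
      by (intro prod_mono conjI zero_le_power power_mono) blast+
    then have "(\<Sum>k\<le>g. pmf p k * nonreach_lb_cov d p k g ^ d) \<le> (\<Sum>k\<le>g. pmf p k * nonreach_lb_cov d p k (Suc g) ^ d)"
      by (intro sum_mono mult_left_mono power_mono nonreach_lb_cov_bounds) simp_all
    also have "\<dots> \<le> (\<Sum>k\<le>Suc g. pmf p k * nonreach_lb_cov d p k (Suc g) ^ d)"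
      by (simp add: nonreach_lb_cov_bounds)
    finally show ?thesis
      by (simp only: Suc nonreach_lb_Suc)
  qed
qed

lemma nonreach_lb_cov_Suc_Suc:
  "nonreach_lb_cov d p (Suc j) (Suc h) = nonreach_lb d p (Suc h) * nonreach_lb_cov d p j h ^ d"
proof -
  have "nonreach_lb_cov d p (Suc j) (Suc h)
      = nonreach_lb d p (Suc h) * (\<Prod>i<j. (nonreach_lb d p (h - i) ^ (d ^ i)) ^ d)"
    unfolding nonreach_lb_cov_def prod.lessThan_Suc_shift
    by (simp add: power_mult[symmetric] mult.commute)
  then show ?thesis
    by (simp add: nonreach_lb_cov_def prod_power_distrib)
qed

lemma nonreach_lb_cov_mult_le_max:
  "nonreach_lb_cov d p k h * nonreach_lb_cov d p j h \<le> nonreach_lb_cov d p (max k j) h"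
  using nonreach_lb_cov_bounds[of d p k h] nonreach_lb_cov_bounds[of d p j h]
  by (cases "k \<le> j") (simp_all add: max_def mult_left_le_one_le mult_right_le_one_le)

lemma nonreach_lb_cov_le: "nonreach_lb_cov d p j h \<le> 1 - reach_prob d p j h"
proof (induction h arbitrary: j)
  case 0
  show ?case
  proof (cases j)
    case (Suc i)
    then show ?thesis
      unfolding Suc nonreach_lb_cov_def prod.lessThan_Suc_shift by (simp add: reach_prob_def)
  qed (simp add: nonreach_lb_cov_def reach_prob_def)
next
  case (Suc h)
  show ?case
  proof (cases j)
    case (Suc i)
    have "nonreach_lb_cov d p j (Suc h)
        = (\<Sum>k\<le>h. pmf p k * (nonreach_lb_cov d p k h * nonreach_lb_cov d p i h) ^ d)"
      unfolding Suc nonreach_lb_cov_Suc_Suc nonreach_lb_Suc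
      by (simp add: sum_distrib_right power_mult_distrib mult.assoc)
    also have "\<dots> \<le> (\<Sum>k\<le>h. pmf p k * (1 - reach_prob d p (max k i) h) ^ d)"
    proof (intro sum_mono mult_left_mono power_mono)
      fix k
      show "nonreach_lb_cov d p k h * nonreach_lb_cov d p i h \<le> 1 - reach_prob d p (max k i) h"
        using nonreach_lb_cov_mult_le_max[of d p k h i] Suc.IH[of "max k i"] by linarith
    qed (simp_all add: nonreach_lb_cov_bounds)
    also have "\<dots> = 1 - reach_prob d p j (Suc h)"
      by (simp add: Suc one_minus_reach_prob_Suc)
    finally show ?thesis .
  qed (simp add: nonreach_lb_cov_def reach_prob_def)
qed

lemma measure_survival_le_nonreach_lb_cov:
  "measure (cone_space p) (survival d p) \<le> 1 - (\<Sum>k\<le>h. pmf p k * nonreach_lb_cov d p k h ^ Suc d)"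
proof -
  have "(\<Sum>k\<le>h. pmf p k * nonreach_lb_cov d p k h ^ Suc d) \<le> (\<Sum>k\<le>h. pmf p k * (1 - reach_prob d p k h) ^ Suc d)"
    by (intro sum_mono mult_left_mono power_mono nonreach_lb_cov_le nonreach_lb_cov_bounds) simp_all
  also have "\<dots> = 1 - measure (cone_space p) {\<omega>. root_reaches_depth d (Suc h) \<omega>}"
    by (rule one_minus_root_reach_prob[symmetric])
  moreover have "survival d p \<subseteq> {\<omega>. root_reaches_depth d (Suc h) \<omega>}"
    using survival_root_reaches_depth by blast
  then have "measure (cone_space p) (survival d p) \<le> measure (cone_space p) {\<omega>. root_reaches_depth d (Suc h) \<omega>}"
    by (rule cone.finite_measure_mono) (simp add: sets_Collect_cone_space)
  ultimately show ?thesis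
    by linarith
qed

lemma nonreach_lb_convergent: "\<exists>L. nonreach_lb d p \<longlonglongrightarrow> L \<and> 0 \<le> L \<and> L \<le> 1"
proof -
  have "nonreach_lb d p \<longlonglongrightarrow> (SUP h. nonreach_lb d p h)"
    using nonreach_lb_bounds nonreach_lb_mono
    by (intro LIMSEQ_incseq_SUP incseq_SucI bdd_aboveI) (auto intro: bdd_aboveI[of _ 1])
  moreover from this have "0 \<le> (SUP h. nonreach_lb d p h)" "(SUP h. nonreach_lb d p h) \<le> 1"
    using nonreach_lb_bounds by (auto intro: LIMSEQ_le_const LIMSEQ_le_const2)
  ultimately show ?thesis
    by blast
qed

lemma tendsto_nonreach_lb_cov:
  assumes "nonreach_lb d p \<longlonglongrightarrow> L"
  shows "(\<lambda>h. nonreach_lb_cov d p k h) \<longlonglongrightarrow> L ^ (\<Sum>i<k. d ^ i)"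
proof -
  have "(\<lambda>h. nonreach_lb d p (h - i)) \<longlonglongrightarrow> L" for i
    by (rule LIMSEQ_offset[where k=i]) (simp add: assms)
  then have "(\<lambda>h. \<Prod>i<k. nonreach_lb d p (h - i) ^ (d ^ i)) \<longlonglongrightarrow> (\<Prod>i<k. L ^ (d ^ i))"
    by (intro tendsto_prod tendsto_power)
  then show ?thesis
    by (simp add: nonreach_lb_cov_def power_sum)
qed

lemma tendsto_sum_nonreach_lb_cov:
  assumes "nonreach_lb d p \<longlonglongrightarrow> L"
  shows "(\<lambda>h. \<Sum>k\<le>h. pmf p k * nonreach_lb_cov d p k h ^ n)
    \<longlonglongrightarrow> measure_pmf.expectation p (\<lambda>k. L ^ ((\<Sum>i<k. d ^ i) * n))"
  using nonreach_lb_cov_bounds tendsto_power[OF tendsto_nonreach_lb_cov[OF assms]]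
  by (intro tendsto_sum_pmf_truncated) (auto simp: power_le_one power_mult)

lemma sum_powers_from_1: "(\<Sum>m=1..k. d ^ m) = d * (\<Sum>i<k. d ^ i :: 'a::comm_semiring_1)"
  by (simp add: sum.atLeast1_atMost_eq flip: sum_distrib_left)

lemma nonreach_lb_limit_fixed_point:
  assumes "nonreach_lb d p \<longlonglongrightarrow> L"
  shows "measure_pmf.expectation p (\<lambda>k. L ^ (\<Sum>m=1..k. d ^ m)) = L"
proof -
  have "(\<lambda>h. nonreach_lb d p (Suc h)) \<longlonglongrightarrow> measure_pmf.expectation p (\<lambda>k. L ^ ((\<Sum>i<k. d ^ i) * d))"
    unfolding nonreach_lb_Suc by (rule tendsto_sum_nonreach_lb_cov[OF assms])
  moreover have "(\<lambda>h. nonreach_lb d p (Suc h)) \<longlonglongrightarrow> L"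
    using assms by (rule LIMSEQ_Suc)
  ultimately have "measure_pmf.expectation p (\<lambda>k. L ^ ((\<Sum>i<k. d ^ i) * d)) = L"
    by (rule LIMSEQ_unique)
  then show ?thesis
    unfolding sum_powers_from_1 by (simp add: mult.commute)
qed

lemma measure_survival_le_limit:
  assumes "nonreach_lb d p \<longlonglongrightarrow> L"
  shows "measure (cone_space p) (survival d p)
    \<le> 1 - measure_pmf.expectation p (\<lambda>k. L ^ ((\<Sum>i<k. d ^ i) * Suc d))"
  using measure_survival_le_nonreach_lb_cov
  by (intro LIMSEQ_le_const[OF tendsto_diff[OF tendsto_const tendsto_sum_nonreach_lb_cov[OF assms]]]) blast

lemma geometric_exponent:
  assumes "d \<noteq> 1"
  shows "(real d + 1) / (real d - 1) * (real d ^ k - 1) = real ((\<Sum>i<k. d ^ i) * Suc d)"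
proof -
  have "(real d + 1) / (real d - 1) * (real d ^ k - 1) = (real d + 1) * (\<Sum>i<k. real d ^ i)"
    unfolding power_diff_1_eq using assms by simp
  also have "\<dots> = real ((\<Sum>i<k. d ^ i) * Suc d)"
    by (simp add: algebra_simps)
  finally show ?thesis .
qed

lemma measure_survival_le_psi:
  fixes \<psi> :: real
  assumes d: "2 \<le> d" and p0: "0 < pmf p 0" and "0 \<le> \<psi>"
    and psi_root: "measure_pmf.expectation p (\<lambda>k. \<psi> ^ (\<Sum>m=1..k. d ^ m)) = \<psi>"
    and psi_least: "\<And>x. x \<ge> 0 \<Longrightarrow>
        measure_pmf.expectation p (\<lambda>k. x ^ (\<Sum>m=1..k. d ^ m)) = x \<Longrightarrow> \<psi> \<le> x"
  shows "measure (cone_space p) (survival d p)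
         \<le> 1 - measure_pmf.expectation p
               (\<lambda>k. \<psi> powr ((real d + 1) / (real d - 1) * (real d ^ k - 1)))"
proof -
  obtain L where L: "nonreach_lb d p \<longlonglongrightarrow> L" "0 \<le> L" "L \<le> 1"
    using nonreach_lb_convergent by blast
  then have "\<psi> \<le> L"
    using psi_least nonreach_lb_limit_fixed_point by blast
  have "0 < (\<Sum>m=1..k. d ^ m)" if "0 < k" for k
    using that d by (intro sum_pos2[where i=1]) auto
  then have "0 < \<psi>"
    using psi_root p0 \<open>0 \<le> \<psi>\<close> pmf_expectation_zero_power[of "\<lambda>k. \<Sum>m=1..k. d ^ m" p]
    by (cases "\<psi> = 0") auto
  moreover have "d \<noteq> 1"
    using d by simp
  ultimately have "\<psi> powr ((real d + 1) / (real d - 1) * (real d ^ k - 1)) = \<psi> ^ ((\<Sum>i<k. d ^ i) * Suc d)" for k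
    by (simp only: geometric_exponent[OF \<open>d \<noteq> 1\<close>] powr_realpow[OF \<open>0 < \<psi>\<close>])
  moreover have "measure_pmf.expectation p (\<lambda>k. \<psi> ^ ((\<Sum>i<k. d ^ i) * Suc d))
      \<le> measure_pmf.expectation p (\<lambda>k. L ^ ((\<Sum>i<k. d ^ i) * Suc d))"
    using \<open>0 \<le> \<psi>\<close> \<open>\<psi> \<le> L\<close> L(3)
    by (intro pmf_expectation_mono[where b=1]) (auto intro: power_mono power_le_one)
  ultimately show ?thesis
    using measure_survival_le_limit[OF L(1)] by simp
qed

theorem corollary2:
  fixes d :: nat and p :: "nat pmf" and \<rho> \<psi> :: real
  assumes d: "d \<ge> 2"
    and p0: "0 < pmf p 0" "pmf p 0 < 1"
    and rho_nonneg: "\<rho> \<ge> 0"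
    and rho_root: "measure_pmf.expectation p (\<lambda>k. \<rho> ^ (d ^ k)) + (1 - \<rho>) * pmf p 0 = \<rho>"
    and rho_least: "\<And>x. x \<ge> 0 \<Longrightarrow>
        measure_pmf.expectation p (\<lambda>k. x ^ (d ^ k)) + (1 - x) * pmf p 0 = x \<Longrightarrow> \<rho> \<le> x"
    and psi_nonneg: "\<psi> \<ge> 0"
    and psi_root: "measure_pmf.expectation p (\<lambda>k. \<psi> ^ (\<Sum>m=1..k. d ^ m)) = \<psi>"
    and psi_least: "\<And>x. x \<ge> 0 \<Longrightarrow>
        measure_pmf.expectation p (\<lambda>k. x ^ (\<Sum>m=1..k. d ^ m)) = x \<Longrightarrow> \<psi> \<le> x"
  shows "1 - (1 - \<rho> powr ((real d + 1) / real d)) * pmf p 0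
           - measure_pmf.expectation p (\<lambda>k. \<rho> powr ((real d + 1) / real d * real d ^ k))
         \<le> measure (cone_space p) (survival d p)
       \<and> measure (cone_space p) (survival d p)
         \<le> 1 - measure_pmf.expectation p
               (\<lambda>k. \<psi> powr ((real d + 1) / (real d - 1) * (real d ^ k - 1)))"
proof -
  \<comment> \<open>\<open>pmf p 0 < 1\<close> only excludes the trivial case \<open>R = 0\<close> a.s.; the bounds do not need it.\<close>
  have "0 < d"
    using d by simp
  then show ?thesis
    by (intro conjI measure_survival_ge_rho[OF _ p0(1) rho_nonneg rho_root rho_least]
        measure_survival_le_psi[OF d p0(1) psi_nonneg psi_root psi_least])
qed

end
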